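(* Let $G<\mathrm{Aut}(\mathbf{T})$ be finitely generated and fix a generating $n$-tuple $S\in\Gamma_n(G)$. Suppose $G$ acts transitively on every level $\{0,1\}^m$ of $\mathbf{T}$. Suppose there is a constant $\alpha$ such that for every $m\ge1$ there exist a string $s\in\{0,1\}^m$ and a nontrivial element $g\in\mathrm{Rist}_G(s)$ with $\ell_S(g)\le\alpha 2^m$. Then $\Gamma_k(G,S)$ has exponential growth for every $k\ge n+2$.
   Context: $\mathbf{T}=\{0,1\}^*$ is the rooted binary tree of finite binary strings (root the empty string, children of $s$ being $s0,s1$), and $\mathrm{Aut}(\mathbf{T})$ is its automorphism group (length-preserving bijections $g$ of strings such that $g(st)$ begins with $g(s)$). For $s\in\{0,1\}^m$, $\mathrm{Rist}(s)$ is the subgroup of elements of $\mathrm{Aut}(\mathbf{T})$ fixing every string that does not begin with $s$, and $\mathrm{Rist}_G(s)=G\cap\mathrm{Rist}(s)$. $\ell_S(g)$ denotes the word length of $g$ with respect to the entries of $S$ and their inverses. For a group $G$, a generating $n$-tuple is $(g_1,\dots,g_n)\in G^n$ generating $G$; the product replacement graph $\Gamma_n(G)$ has vertices the generating $n$-tuples, with edges from $(g_1,\dots,g_n)$ to each tuple obtained by replacing $g_j$ by $g_jg_i^{\pm1}$ or $g_i^{\pm1}g_j$, for every ordered pair $i\neq j$. For $S=(g_1,\dots,g_n)$ and $k\ge n$, $\Gamma_k(G,S)$ is the connected component of $\Gamma_k(G)$ containing $(g_1,\dots,g_n,1,\dots,1)$. A connected graph has exponential growth if for some vertex $v$ there is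 $\beta>1$ such that the number of vertices at distance at most $r$ from $v$ is at least $\beta^r$ for all sufficiently large $r$. *)

theory Defs
  imports Complex_Main "HOL-Library.Sublist"
begin

text \<open>Vertices of the binary tree T are finite binary strings (bool list);
  automorphisms are functions on strings, group product is composition.\<close>

type_synonym tree_map = "bool list \<Rightarrow> bool list"

definition tree_aut :: "tree_map \<Rightarrow> bool" where
  "tree_aut g \<longleftrightarrow> bij g \<and> (\<forall>s. length (g s) = length s)
                   \<and> (\<forall>s t. prefix (g s) (g (s @ t)))"

definition tree_subgroup :: "tree_map set \<Rightarrow> bool" where
  "tree_subgroup G \<longleftrightarrow> G \<subseteq> {g. tree_aut g} \<and> id \<in> G
      \<and> (\<forall>g\<in>G. \<forall>h\<in>G. g \<circ> h \<in> G) \<and> (\<forall>g\<in>G. inv g \<in> G)"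

definition gen_by :: "tree_map set \<Rightarrow> tree_map set" where
  "gen_by A = {foldr (\<circ>) w id | w. set w \<subseteq> A \<union> inv ` A}"

definition gen_tuple :: "tree_map set \<Rightarrow> tree_map list \<Rightarrow> bool" where
  "gen_tuple G u \<longleftrightarrow> set u \<subseteq> G \<and> gen_by (set u) = G"

definition word_length :: "tree_map list \<Rightarrow> tree_map \<Rightarrow> nat" where
  "word_length S g = (LEAST k. \<exists>w. length w = k \<and> set w \<subseteq> set S \<union> inv ` set S
                                   \<and> foldr (\<circ>) w id = g)"

definition rist :: "tree_map set \<Rightarrow> bool list \<Rightarrow> tree_map set" where
  "rist G s = {g \<in> G. \<forall>t. \<not> prefix s t \<longrightarrow> g t = t}"

definition pr_move :: "tree_map list \<Rightarrow> tree_map list \<Rightarrow> bool" where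
  "pr_move u v \<longleftrightarrow> (\<exists>i j. i < length u \<and> j < length u \<and> i \<noteq> j \<and>
      (v = u[j := u!j \<circ> u!i] \<or> v = u[j := u!j \<circ> inv (u!i)]
     \<or> v = u[j := u!i \<circ> u!j] \<or> v = u[j := inv (u!i) \<circ> u!j]))"

definition pr_edge :: "tree_map set \<Rightarrow> nat \<Rightarrow> tree_map list \<Rightarrow> tree_map list \<Rightarrow> bool" where
  "pr_edge G k u v \<longleftrightarrow> length u = k \<and> length v = k \<and> gen_tuple G u \<and> gen_tuple G v
      \<and> pr_move u v"

text \<open>Vertex set of Gamma_k(G,S): component containing (S,1,...,1).\<close>
definition pr_component :: "tree_map set \<Rightarrow> tree_map list \<Rightarrow> nat \<Rightarrow> tree_map list set" where
  "pr_component G S k = {u. (pr_edge G k)\<^sup>*\<^sup>* (S @ replicate (k - length S) id) u}"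

definition pr_ball :: "tree_map set \<Rightarrow> nat \<Rightarrow> tree_map list \<Rightarrow> nat \<Rightarrow> tree_map list set" where
  "pr_ball G k v r = {u. \<exists>i\<le>r. (pr_edge G k ^^ i) v u}"

definition pr_exp_growth :: "tree_map set \<Rightarrow> tree_map list \<Rightarrow> nat \<Rightarrow> bool" where
  "pr_exp_growth G S k \<longleftrightarrow> (\<exists>v\<in>pr_component G S k. \<exists>\<beta>::real. \<beta> > 1 \<and>
      (\<exists>R. \<forall>r\<ge>R. \<beta> ^ r \<le> real (card (pr_ball G k v r))))"

end

theory Submission
  imports Defs
begin

text \<open>Fill the first n slots with S, keep two working slots x and y, and leave the remaining
  slots trivial. With \<open>\<ell>\<^sub>S(g)\<close> moves one writes a nontrivial \<open>g \<in> Rist\<^sub>G(s)\<close>, s of level m,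
  into y. A walk of length below \<open>2\<cdot>2\<^sup>m\<close> in the Schreier graph of level m visits every vertex;
  conjugating y along it (two moves per step) yields in turn a nontrivial element of
  \<open>Rist\<^sub>G(v)\<close> for every vertex v of level m, and whenever v lies in a chosen set A we replace x
  by yx (one move). The resulting x fixes level m and acts nontrivially exactly below the
  vertices of A. Hence the \<open>2\<^sup>2\<^sup>m\<close> subsets A give distinct tuples within distance
  \<open>(\<alpha> + 6) 2\<^sup>m\<close> of the base point, which forces exponential growth.\<close>

lemma tree_aut_length: "tree_aut g \<Longrightarrow> length (g s) = length s"
  by (simp add: tree_aut_def)

lemma tree_aut_bij: "tree_aut g \<Longrightarrow> bij g"
  by (simp add: tree_aut_def)

lemma tree_aut_prefix:
  assumes "tree_aut g" "prefix s t"
  shows "prefix (g s) (g t)"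
  using assms by (auto simp: tree_aut_def prefix_def)

lemma prefix_eq_if_same_length: "prefix a z \<Longrightarrow> prefix b z \<Longrightarrow> length a = length b \<Longrightarrow> a = b"
  by (metis prefix_length_prefix prefix_order.antisym order_refl)

lemma rist_fixes_level:
  assumes y: "tree_aut y" "y \<in> rist G v" and t: "length t = length v"
  shows "y t = t"
proof -
  have others: "y u = u" if "length u = length v" "u \<noteq> v" for u
    using y(2) prefix_eq_if_same_length[of v u u] that unfolding rist_def by auto
  show ?thesis
  proof (cases "t = v")
    case True
    show ?thesis
    proof (rule ccontr)
      assume moved: "y t \<noteq> t"
      then have "y (y t) = y t"
        using others tree_aut_length[OF y(1)] True by simp
      then show False
        using moved bij_is_inj[OF tree_aut_bij[OF y(1)]] by (meson injD)
    qed
  qed (use others t in auto)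
qed

lemma rist_conj:
  assumes c: "tree_aut c" and y: "y \<in> rist G v" and in_G: "c \<circ> y \<circ> inv c \<in> G"
  shows "c \<circ> y \<circ> inv c \<in> rist G (c v)"
proof -
  have "(c \<circ> y \<circ> inv c) t = t" if "\<not> prefix (c v) t" for t
  proof -
    have ct: "c (inv c t) = t"
      using tree_aut_bij[OF c] by (simp add: bij_is_surj surj_f_inv_f)
    then have "\<not> prefix v (inv c t)"
      using that tree_aut_prefix[OF c] by metis
    then show ?thesis
      using y ct unfolding rist_def by simp
  qed
  then show ?thesis
    using in_G unfolding rist_def by blast
qed

lemma bij_conj_eq_id_iff:
  assumes "bij c"
  shows "c \<circ> y \<circ> inv c = id \<longleftrightarrow> y = id"
proof
  assume conj: "c \<circ> y \<circ> inv c = id"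
  have "y = inv c \<circ> (c \<circ> y \<circ> inv c) \<circ> c"
    using assms by (simp add: fun_eq_iff bij_is_inj bij_is_surj surj_f_inv_f inv_f_f)
  then show "y = id"
    using assms conj by (simp add: bij_is_inj)
qed (use assms in \<open>simp add: fun_eq_iff bij_is_surj surj_f_inv_f\<close>)

definition level_support :: "nat \<Rightarrow> tree_map \<Rightarrow> bool list set \<Rightarrow> bool" where
  "level_support m x B \<longleftrightarrow> (\<forall>t. length t = m \<longrightarrow> x t = t) \<and>
     (\<forall>v. length v = m \<longrightarrow> ((\<exists>t. prefix v t \<and> x t \<noteq> t) \<longleftrightarrow> v \<in> B))"

lemma level_support_id: "level_support m id {}"
  by (simp add: level_support_def)

lemma level_support_eq:
  assumes "level_support m x A" "\<forall>v\<in>A. length v = m"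
  shows "{v. length v = m \<and> (\<exists>t. prefix v t \<and> x t \<noteq> t)} = A"
  using assms unfolding level_support_def by auto

lemma level_support_insert:
  assumes x: "tree_aut x" "level_support m x B"
    and y: "tree_aut y" "y \<in> rist G v" "y \<noteq> id" and v: "length v = m" "v \<notin> B"
  shows "level_support m (y \<circ> x) (insert v B)"
proof -
  have x_fix: "\<And>t. length t = m \<Longrightarrow> x t = t"
    and x_supp: "\<And>v. length v = m \<Longrightarrow> (\<exists>t. prefix v t \<and> x t \<noteq> t) \<longleftrightarrow> v \<in> B"
    using x(2) unfolding level_support_def by blast+
  have y_supp: "\<And>t. \<not> prefix v t \<Longrightarrow> y t = t"
    using y(2) unfolding rist_def by blast
  have "(\<exists>t. prefix v' t \<and> (y \<circ> x) t \<noteq> t) \<longleftrightarrow> v' \<in> insert v B" if v': "length v' = m" for v'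
  proof (cases "v' = v")
    case True
    obtain t where t: "y t \<noteq> t"
      using y(3) by (metis eq_id_iff)
    then have "prefix v t"
      using y_supp by blast
    moreover have "x t = t"
      using x_supp[OF v(1)] v(2) calculation by blast
    ultimately show ?thesis
      using True t by auto
  next
    case False
    have "(y \<circ> x) t = x t" if "prefix v' t" for t
    proof -
      have "prefix v' (x t)"
        using tree_aut_prefix[OF x(1) that] x_fix[OF v'] by simp
      then have "\<not> prefix v (x t)"
        using False prefix_eq_if_same_length v(1) v' by metis
      then show ?thesis
        using y_supp by simp
    qed
    then show ?thesis
      using x_supp[OF v'] False by auto
  qed
  moreover have "(y \<circ> x) t = t" if "length t = m" for t
    using that x_fix rist_fixes_level[OF y(1,2)] v(1) by simp
  ultimately show ?thesis
    unfolding level_support_def by blast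
qed

lemma successively_detour:
  assumes walk: "successively R (s # ws)" and u: "u \<in> set (s # ws)"
    and edge: "R u w" "R w u"
  obtains ws' where "successively R (s # ws')" "set (s # ws') = insert w (set (s # ws))"
    "length ws' = length ws + 2"
proof -
  obtain p q where split: "s # ws = p @ u # q"
    using u by (meson split_list)
  have detour: "s # tl (p @ u # w # u # q) = p @ u # w # u # q"
    using split by (cases p) auto
  show ?thesis
  proof
    show "successively R (s # tl (p @ u # w # u # q))"
      unfolding detour using walk edge unfolding split
      by (auto simp: successively_append_iff)
    show "set (s # tl (p @ u # w # u # q)) = insert w (set (s # ws))"
      unfolding detour split by auto
    show "length (tl (p @ u # w # u # q)) = length ws + 2"
      using arg_cong[OF split, of length] by simp
  qed
qed

lemma exists_exit_edge:
  assumes fin: "finite V" and U: "U \<subseteq> V" "card U < card V" "s \<in> U"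
    and conn: "\<And>t. t \<in> V \<Longrightarrow> R\<^sup>*\<^sup>* s t"
  shows "\<exists>u\<in>U. \<exists>w. R u w \<and> w \<notin> U"
proof (rule ccontr)
  assume no_exit: "\<not> ?thesis"
  have "t \<in> U" if "R\<^sup>*\<^sup>* s t" for t
    using that by (induction rule: rtranclp_induct) (use no_exit U(3) in auto)
  then have "V \<subseteq> U"
    using conn by blast
  then show False
    using card_mono[OF finite_subset[OF U(1) fin]] U(2) by (simp add: leD)
qed

lemma spanning_walk:
  assumes fin: "finite V" and s: "s \<in> V" and sym: "\<And>a b. R a b \<Longrightarrow> R b a"
    and closed: "\<And>a b. a \<in> V \<Longrightarrow> R a b \<Longrightarrow> b \<in> V"
    and conn: "\<And>t. t \<in> V \<Longrightarrow> R\<^sup>*\<^sup>* s t"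
  obtains ws where "successively R (s # ws)" "set (s # ws) = V" "length ws \<le> 2 * (card V - 1)"
proof -
  have "N \<le> card V \<longrightarrow> (\<exists>ws. successively R (s # ws) \<and> set (s # ws) \<subseteq> V
          \<and> card (set (s # ws)) = N \<and> length ws \<le> 2 * (N - 1))" if "1 \<le> N" for N
    using that
  proof (induction N rule: nat_induct_at_least)
    case base
    show ?case
      using s by (intro impI exI[of _ "[]"]) auto
  next
    case (Suc N)
    show ?case
    proof
      assume N: "Suc N \<le> card V"
      then obtain ws where ws: "successively R (s # ws)" "set (s # ws) \<subseteq> V"
        "card (set (s # ws)) = N" "length ws \<le> 2 * (N - 1)"
        using Suc.IH by auto
      obtain u w where uw: "u \<in> set (s # ws)" "R u w" "w \<notin> set (s # ws)"
        using exists_exit_edge[OF fin ws(2) _ _ conn] ws(3) N by auto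
      obtain ws' where "successively R (s # ws')"
        "set (s # ws') = insert w (set (s # ws))" "length ws' = length ws + 2"
        using successively_detour[OF ws(1) uw(1,2) sym[OF uw(2)]] by blast
      then show "\<exists>ws. successively R (s # ws) \<and> set (s # ws) \<subseteq> V
          \<and> card (set (s # ws)) = Suc N \<and> length ws \<le> 2 * (Suc N - 1)"
        using ws uw closed Suc.hyps by (intro exI[of _ ws']) (auto simp: card_insert_if)
    qed
  qed
  moreover have "1 \<le> card V"
    using fin s by (metis One_nat_def Suc_leI card_gt_0_iff empty_iff)
  ultimately obtain ws where "successively R (s # ws)" "set (s # ws) \<subseteq> V"
    "card (set (s # ws)) = card V" "length ws \<le> 2 * (card V - 1)"
    by blast
  then show ?thesis
    using that fin by (metis card_subset_eq)
qed

lemma pr_ball_refl: "v \<in> pr_ball G k v r"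
  unfolding pr_ball_def by (intro CollectI exI[of _ 0]) simp

lemma pr_ball_edge: "pr_edge G k u v \<Longrightarrow> v \<in> pr_ball G k u 1"
  unfolding pr_ball_def by (intro CollectI exI[of _ 1]) auto

lemma pr_ball_trans:
  assumes "v \<in> pr_ball G k u a" "w \<in> pr_ball G k v b"
  shows "w \<in> pr_ball G k u (a + b)"
proof -
  obtain i j where "i \<le> a" "(pr_edge G k ^^ i) u v" "j \<le> b" "(pr_edge G k ^^ j) v w"
    using assms unfolding pr_ball_def by blast
  then show ?thesis
    unfolding pr_ball_def by (intro CollectI exI[of _ "i + j"]) (auto simp: relpowp_add)
qed

lemma pr_ball_mono: "r \<le> r' \<Longrightarrow> pr_ball G k u r \<subseteq> pr_ball G k u r'"
  unfolding pr_ball_def using le_trans by blast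

lemma finite_pr_move: "finite {v. pr_move u v}"
proof (rule finite_subset)
  show "{v. pr_move u v} \<subseteq> (\<Union>i<length u. \<Union>j<length u.
     {u[j := u!j \<circ> u!i], u[j := u!j \<circ> inv (u!i)], u[j := u!i \<circ> u!j], u[j := inv (u!i) \<circ> u!j]})"
    unfolding pr_move_def by blast
qed simp

lemma finite_pr_ball: "finite (pr_ball G k u r)"
proof -
  have "finite {w. (pr_edge G k ^^ i) u w}" for i
  proof (induction i)
    case (Suc i)
    have "{w. (pr_edge G k ^^ Suc i) u w} \<subseteq> (\<Union>w'\<in>{w. (pr_edge G k ^^ i) u w}. {v. pr_move w' v})"
      unfolding pr_edge_def by auto
    then show ?case
      using Suc finite_pr_move by (meson finite_UN_I finite_subset)
  qed simp
  moreover have "pr_ball G k u r = (\<Union>i\<le>r. {w. (pr_edge G k ^^ i) u w})"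
    unfolding pr_ball_def by auto
  ultimately show ?thesis
    by simp
qed

lemma gen_by_mono: "A \<subseteq> B \<Longrightarrow> gen_by A \<subseteq> gen_by B"
  unfolding gen_by_def by blast

lemma foldr_comp_in_subgroup:
  assumes "tree_subgroup G" "set w \<subseteq> G"
  shows "foldr (\<circ>) w id \<in> G"
  using assms(2) by (induction w) (use assms(1) in \<open>auto simp: tree_subgroup_def\<close>)

lemma gen_by_subgroup:
  assumes "tree_subgroup G" "A \<subseteq> G"
  shows "gen_by A \<subseteq> G"
proof
  fix g
  assume "g \<in> gen_by A"
  then obtain w where "g = foldr (\<circ>) w id" "set w \<subseteq> A \<union> inv ` A"
    unfolding gen_by_def by blast
  moreover have "A \<union> inv ` A \<subseteq> G"
    using assms unfolding tree_subgroup_def by blast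
  ultimately show "g \<in> G"
    using foldr_comp_in_subgroup[OF assms(1)] by blast
qed

lemma exp_growth_of_double_exp_samples:
  fixes f :: "nat \<Rightarrow> nat" and C :: nat
  assumes mono: "mono f" and C: "0 < C"
    and samples: "\<And>m. 1 \<le> m \<Longrightarrow> 2 ^ 2 ^ m \<le> f (C * 2 ^ m)"
  shows "\<exists>\<beta>::real. \<beta> > 1 \<and> (\<exists>R. \<forall>r\<ge>R. \<beta> ^ r \<le> real (f r))"
proof (intro exI conjI allI impI)
  define \<beta> :: real where "\<beta> = 2 powr (1 / (2 * real C))"
  show "\<beta> > 1"
    unfolding \<beta>_def using C by simp
  fix r
  assume r: "2 * C \<le> r"
  have "2 \<le> r div C"
    using div_le_mono[OF r, of C] C by simp
  then obtain m where m: "2 ^ m \<le> r div C" "r div C < 2 ^ (m + 1)"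
    using ex_power_ivl1[of 2 "r div C"] by auto
  have "1 \<le> m"
    using \<open>2 \<le> r div C\<close> m(2) by (cases m) auto
  have "C * 2 ^ m \<le> C * (r div C)"
    using m(1) by simp
  also have "\<dots> \<le> r"
    by simp
  finally have "2 ^ 2 ^ m \<le> f r"
    using samples[OF \<open>1 \<le> m\<close>] mono by (meson monoD order_trans)
  have "r < C * (r div C + 1)"
    using dividend_less_times_div[OF C, of r] by simp
  also have "\<dots> \<le> C * 2 ^ (m + 1)"
    using m(2) by (intro mult_le_mono2) simp
  finally have "real r < real (C * 2 ^ (m + 1))"
    by (simp only: of_nat_less_iff)
  then have "real r * (1 / (2 * real C)) \<le> real (2 ^ m)"
    using C by (simp add: field_simps)
  then have "\<beta> ^ r \<le> 2 powr real (2 ^ m)"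
    unfolding \<beta>_def by (simp add: powr_power)
  also have "\<dots> = real (2 ^ 2 ^ m)"
    using powr_realpow[of 2 "2 ^ m"] by simp
  also have "\<dots> \<le> real (f r)"
    using \<open>2 ^ 2 ^ m \<le> f r\<close> by (simp only: of_nat_le_iff)
  finally show "\<beta> ^ r \<le> real (f r)" .
qed

lemma le_nat_ceiling_mult:
  fixes l N :: nat and \<alpha> :: real
  assumes "real l \<le> \<alpha> * real N"
  shows "l \<le> nat \<lceil>\<alpha>\<rceil> * N"
proof -
  have "\<alpha> * real N \<le> real (nat \<lceil>\<alpha>\<rceil> * N)"
    by (simp add: mult_right_mono real_nat_ceiling_ge)
  then show ?thesis
    using assms by linarith
qed

locale pr_setting =
  fixes G :: "tree_map set" and S :: "tree_map list" and n k :: nat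
  assumes subgroup: "tree_subgroup G" and length_S: "length S = n" and gen_S: "gen_tuple G S"
    and k_ge: "n + 2 \<le> k"
begin

definition tuple :: "tree_map \<Rightarrow> tree_map \<Rightarrow> tree_map list" where
  "tuple x y = S @ [x, y] @ replicate (k - n - 2) id"

definition letters :: "tree_map set" where
  "letters = set S \<union> inv ` set S"

definition schreier_adj :: "bool list \<Rightarrow> bool list \<Rightarrow> bool" where
  "schreier_adj a b \<longleftrightarrow> (\<exists>c\<in>letters. b = c a)"

lemma G_aut: "g \<in> G \<Longrightarrow> tree_aut g"
  and G_comp: "g \<in> G \<Longrightarrow> h \<in> G \<Longrightarrow> g \<circ> h \<in> G"
  and G_inv: "g \<in> G \<Longrightarrow> inv g \<in> G"
  and G_id: "id \<in> G"
  using subgroup unfolding tree_subgroup_def by blast+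

lemma letters_G: "c \<in> letters \<Longrightarrow> c \<in> G"
  using gen_S G_inv unfolding letters_def gen_tuple_def by blast

lemma letters_inv: "c \<in> letters \<Longrightarrow> inv c \<in> letters"
  using gen_S G_aut tree_aut_bij unfolding letters_def gen_tuple_def
  by (auto simp: inv_inv_eq)

lemma letter_index: "c \<in> letters \<Longrightarrow> \<exists>i<n. c = S ! i \<or> c = inv (S ! i)"
  using length_S unfolding letters_def by (auto simp: in_set_conv_nth)

lemma word_of_element:
  assumes "g \<in> G"
  shows "\<exists>w. length w = word_length S g \<and> set w \<subseteq> letters \<and> foldr (\<circ>) w id = g"
proof -
  have "\<exists>l w. length w = l \<and> set w \<subseteq> letters \<and> foldr (\<circ>) w id = g"
    using assms gen_S unfolding gen_tuple_def gen_by_def letters_def by blast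
  then show ?thesis
    unfolding word_length_def letters_def by (rule LeastI_ex)
qed

lemma length_tuple: "length (tuple x y) = k"
  using k_ge length_S unfolding tuple_def by simp

lemma gen_tuple_tuple:
  assumes "x \<in> G" "y \<in> G"
  shows "gen_tuple G (tuple x y)"
proof -
  have entries: "set (tuple x y) \<subseteq> G"
    using assms gen_S G_id unfolding tuple_def gen_tuple_def by auto
  have "G = gen_by (set S)"
    using gen_S unfolding gen_tuple_def by simp
  also have "\<dots> \<subseteq> gen_by (set (tuple x y))"
    by (rule gen_by_mono) (auto simp: tuple_def)
  finally show ?thesis
    using gen_by_subgroup[OF subgroup entries] entries unfolding gen_tuple_def by blast
qed

lemma tuple_in_component: "tuple id id \<in> pr_component G S k"
proof -
  have "k - n = Suc (Suc (k - n - 2))"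
    using k_ge by simp
  then have "S @ replicate (k - length S) id = tuple id id"
    unfolding tuple_def using length_S by simp
  then show ?thesis
    unfolding pr_component_def by simp
qed

lemma tuple_nth_x: "tuple x y ! n = x"
  and tuple_nth_y: "tuple x y ! Suc n = y"
  and tuple_nth_S: "i < n \<Longrightarrow> tuple x y ! i = S ! i"
  and tuple_upd_x: "(tuple x y)[n := x'] = tuple x' y"
  and tuple_upd_y: "(tuple x y)[Suc n := y'] = tuple x y'"
  unfolding tuple_def using length_S by (simp_all add: nth_append list_update_append)

lemma tuple_edgeI:
  assumes "x \<in> G" "y \<in> G" "x' \<in> G" "y' \<in> G" "pr_move (tuple x y) (tuple x' y')"
  shows "tuple x' y' \<in> pr_ball G k (tuple x y) 1"
  using assms length_tuple gen_tuple_tuple by (intro pr_ball_edge) (simp add: pr_edge_def)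

lemma
  assumes "x \<in> G" "y \<in> G" "c \<in> letters"
  shows mult_right_letter: "tuple x (y \<circ> c) \<in> pr_ball G k (tuple x y) 1"
    and mult_left_letter: "tuple x (c \<circ> y) \<in> pr_ball G k (tuple x y) 1"
proof -
  obtain i where "i < n" "c = S ! i \<or> c = inv (S ! i)"
    using letter_index[OF assms(3)] by blast
  then have "pr_move (tuple x y) (tuple x (y \<circ> c))" "pr_move (tuple x y) (tuple x (c \<circ> y))"
    unfolding pr_move_def using length_tuple k_ge
    by (intro exI[of _ i] exI[of _ "Suc n"]; auto simp: tuple_nth_y tuple_nth_S tuple_upd_y)+
  moreover have "y \<circ> c \<in> G" "c \<circ> y \<in> G"
    using assms G_comp letters_G by blast+
  ultimately show "tuple x (y \<circ> c) \<in> pr_ball G k (tuple x y) 1"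
    and "tuple x (c \<circ> y) \<in> pr_ball G k (tuple x y) 1"
    using tuple_edgeI assms(1,2) by blast+
qed

lemma mult_x_by_y:
  assumes "x \<in> G" "y \<in> G"
  shows "tuple (y \<circ> x) y \<in> pr_ball G k (tuple x y) 1"
proof (rule tuple_edgeI)
  show "pr_move (tuple x y) (tuple (y \<circ> x) y)"
    unfolding pr_move_def using length_tuple k_ge
    by (intro exI[of _ "Suc n"] exI[of _ n]) (auto simp: tuple_nth_y tuple_nth_x tuple_upd_x)
qed (use assms G_comp in auto)

lemma word_in_ball:
  assumes "x \<in> G" "y \<in> G" "set w \<subseteq> letters"
  shows "tuple x (y \<circ> foldr (\<circ>) w id) \<in> pr_ball G k (tuple x y) (length w)"
  using assms(2,3)
proof (induction w arbitrary: y)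
  case (Cons c w)
  have "y \<circ> c \<in> G" "set w \<subseteq> letters"
    using Cons.prems letters_G G_comp by simp_all
  note rest = Cons.IH[OF this]
  show ?case
    using pr_ball_trans[OF mult_right_letter[OF assms(1) Cons.prems(1)] rest] Cons.prems(2)
    by (simp add: comp_assoc)
qed (simp add: pr_ball_refl)

lemma schreier_adj_length: "schreier_adj a b \<Longrightarrow> length b = length a"
  using letters_G G_aut tree_aut_length unfolding schreier_adj_def by blast

lemma conj_along_edge:
  assumes x: "x \<in> G" and y: "y \<in> rist G v" "y \<noteq> id" and adj: "schreier_adj v w"
  obtains y' where "y' \<in> rist G w" "y' \<noteq> id" "tuple x y' \<in> pr_ball G k (tuple x y) 2"
proof -
  obtain c where c: "c \<in> letters" "w = c v"
    using adj unfolding schreier_adj_def by blast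
  have y_G: "y \<in> G"
    using y(1) unfolding rist_def by blast
  have c_aut: "tree_aut c"
    using G_aut[OF letters_G[OF c(1)]] .
  have "c \<circ> y \<in> G"
    using G_comp[OF letters_G[OF c(1)] y_G] .
  then have "c \<circ> y \<circ> inv c \<in> G"
    using G_comp letters_G[OF letters_inv[OF c(1)]] by blast
  then have "c \<circ> y \<circ> inv c \<in> rist G w"
    using rist_conj[OF c_aut y(1)] c(2) by simp
  moreover have "c \<circ> y \<circ> inv c \<noteq> id"
    using bij_conj_eq_id_iff[OF tree_aut_bij[OF c_aut]] y(2) by simp
  moreover have "tuple x (c \<circ> y \<circ> inv c) \<in> pr_ball G k (tuple x y) (1 + 1)"
    using pr_ball_trans[OF mult_left_letter[OF x y_G c(1)]
        mult_right_letter[OF x \<open>c \<circ> y \<in> G\<close> letters_inv[OF c(1)]]] .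
  ultimately show ?thesis
    using that by (simp add: numeral_2_eq_2)
qed

lemma absorb_vertex:
  assumes "x \<in> G" "level_support m x B" "y \<in> rist G v" "y \<noteq> id" "length v = m"
  obtains x' where "x' \<in> G" "tuple x' y \<in> pr_ball G k (tuple x y) 1"
    "level_support m x' (B \<union> (A \<inter> {v}))"
proof (cases "v \<in> A \<and> v \<notin> B")
  case True
  have y: "y \<in> G"
    using assms(3) unfolding rist_def by blast
  have "level_support m (y \<circ> x) (insert v B)"
    using assms True G_aut y by (intro level_support_insert) auto
  moreover have "insert v B = B \<union> (A \<inter> {v})"
    using True by auto
  ultimately show ?thesis
    using that[of "y \<circ> x"] mult_x_by_y[OF assms(1) y] G_comp[OF y assms(1)] by simp
next
  case False
  then have "B \<union> (A \<inter> {v}) = B"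
    by auto
  then show ?thesis
    using that[of x] assms(1,2) pr_ball_refl by simp
qed

lemma sweep_walk:
  assumes "successively schreier_adj (v # ws)" "x \<in> G" "level_support m x B"
    and "y \<in> rist G v" "y \<noteq> id" "length v = m"
  shows "\<exists>x' y'. tuple x' y' \<in> pr_ball G k (tuple x y) (3 * length ws + 1)
    \<and> level_support m x' (B \<union> (A \<inter> set (v # ws)))"
  using assms
proof (induction ws arbitrary: v x y B)
  case Nil
  obtain x' where "tuple x' y \<in> pr_ball G k (tuple x y) 1" "level_support m x' (B \<union> (A \<inter> {v}))"
    using absorb_vertex[OF Nil.prems(2-6)] .
  then show ?case
    by auto
next
  case (Cons w ws)
  obtain x1 where x1: "x1 \<in> G" "tuple x1 y \<in> pr_ball G k (tuple x y) 1"
    "level_support m x1 (B \<union> (A \<inter> {v}))"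
    using absorb_vertex[OF Cons.prems(2-6)] .
  have adj: "schreier_adj v w" and walk: "successively schreier_adj (w # ws)"
    using Cons.prems(1) by simp_all
  obtain y1 where y1: "y1 \<in> rist G w" "y1 \<noteq> id" "tuple x1 y1 \<in> pr_ball G k (tuple x1 y) 2"
    using conj_along_edge[OF x1(1) Cons.prems(4,5) adj] .
  have "length w = m"
    using schreier_adj_length[OF adj] Cons.prems(6) by simp
  then obtain x' y' where
    far: "tuple x' y' \<in> pr_ball G k (tuple x1 y1) (3 * length ws + 1)" and
    supp: "level_support m x' (B \<union> (A \<inter> {v}) \<union> (A \<inter> set (w # ws)))"
    using Cons.IH[OF walk x1(1,3) y1(1,2)] by blast
  have "tuple x' y' \<in> pr_ball G k (tuple x y) (1 + 2 + (3 * length ws + 1))"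
    using pr_ball_trans[OF pr_ball_trans[OF x1(2) y1(3)] far] .
  moreover have "1 + 2 + (3 * length ws + 1) = 3 * length (w # ws) + 1"
    by simp
  moreover have "B \<union> (A \<inter> {v}) \<union> (A \<inter> set (w # ws)) = B \<union> (A \<inter> set (v # w # ws))"
    by auto
  ultimately show ?case
    using supp by metis
qed

lemma schreier_reach:
  assumes "set w \<subseteq> letters"
  shows "schreier_adj\<^sup>*\<^sup>* s (foldr (\<circ>) w id s)"
  using assms
proof (induction w)
  case (Cons c w)
  then have "c \<in> letters" "set w \<subseteq> letters"
    by simp_all
  then have "schreier_adj (foldr (\<circ>) w id s) (foldr (\<circ>) (c # w) id s)"
    unfolding schreier_adj_def by auto
  then show ?case
    using Cons.IH[OF \<open>set w \<subseteq> letters\<close>] by (metis rtranclp.rtrancl_into_rtrancl)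
qed simp

lemma level_walk:
  assumes transitive: "\<And>t. length t = length s \<Longrightarrow> \<exists>h\<in>G. h s = t"
  obtains ws where "successively schreier_adj (s # ws)"
    "set (s # ws) = {t. length t = length s}" "length ws \<le> 2 * 2 ^ length s - 2"
proof -
  let ?V = "{t :: bool list. length t = length s}"
  have card: "card ?V = 2 ^ length s"
    using card_lists_length_eq[of "UNIV :: bool set"] by simp
  have sym: "schreier_adj b a" if adj: "schreier_adj a b" for a b
  proof -
    obtain c where c: "c \<in> letters" "b = c a"
      using adj unfolding schreier_adj_def by blast
    then have "a = inv c b"
      using tree_aut_bij[OF G_aut[OF letters_G[OF c(1)]]] by (simp add: bij_is_inj)
    then show ?thesis
      using letters_inv[OF c(1)] unfolding schreier_adj_def by blast
  qed
  have closed: "b \<in> ?V" if "a \<in> ?V" "schreier_adj a b" for a b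
    using that schreier_adj_length by simp
  have conn: "schreier_adj\<^sup>*\<^sup>* s t" if t: "t \<in> ?V" for t
  proof -
    obtain h where h: "h \<in> G" "h s = t"
      using transitive t by blast
    then obtain w where "set w \<subseteq> letters" "foldr (\<circ>) w id = h"
      using word_of_element by blast
    then show ?thesis
      using schreier_reach[of w s] h(2) by simp
  qed
  have "finite ?V"
    using finite_lists_length_eq[of "UNIV :: bool set"] by simp
  then obtain ws where "successively schreier_adj (s # ws)" "set (s # ws) = ?V"
    "length ws \<le> 2 * (card ?V - 1)"
    using spanning_walk[of ?V s schreier_adj] sym closed conn by blast
  then show ?thesis
    using that card by (simp add: right_diff_distrib')
qed

lemma card_ball_ge_double_exp:
  assumes transitive: "\<And>t. length t = m \<Longrightarrow> \<exists>h\<in>G. h s = t"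
    and s: "length s = m" and g: "g \<in> rist G s" "g \<noteq> id"
    and radius: "word_length S g + 6 * 2 ^ m \<le> r"
  shows "2 ^ 2 ^ m \<le> card (pr_ball G k (tuple id id) r)"
proof -
  let ?V = "{t :: bool list. length t = m}"
  let ?ball = "pr_ball G k (tuple id id) r"
  obtain ws where ws: "successively schreier_adj (s # ws)" "set (s # ws) = ?V"
    "length ws \<le> 2 * 2 ^ m - 2"
    using level_walk[of s] transitive unfolding s by blast
  have "g \<in> G"
    using g unfolding rist_def by blast
  then obtain w where w: "length w = word_length S g" "set w \<subseteq> letters" "foldr (\<circ>) w id = g"
    using word_of_element by blast
  have g_reached: "tuple id g \<in> pr_ball G k (tuple id id) (word_length S g)"
    using word_in_ball[OF G_id G_id w(2)] w by simp
  have "3 * length ws + 1 \<le> 6 * 2 ^ m"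
    using ws(3) one_le_power[of "2::nat" m] by linarith
  then have sweep_reached: "pr_ball G k (tuple id g) (3 * length ws + 1) \<subseteq> ?ball"
    using pr_ball_trans[OF g_reached] pr_ball_mono radius by (meson add_le_mono1 le_trans subset_iff)
  define support :: "tree_map list \<Rightarrow> bool list set" where
    "support u = {v. length v = m \<and> (\<exists>t. prefix v t \<and> (u ! n) t \<noteq> t)}" for u
  have "A \<in> support ` ?ball" if A: "A \<subseteq> ?V" for A
  proof -
    obtain x y where xy: "tuple x y \<in> pr_ball G k (tuple id g) (3 * length ws + 1)"
      "level_support m x ({} \<union> (A \<inter> set (s # ws)))"
      using sweep_walk[OF ws(1) G_id level_support_id g s] by blast
    have "A \<inter> set (s # ws) = A"
      using A ws(2) by blast
    then have "support (tuple x y) = A"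
      using level_support_eq[of m x A] xy(2) A unfolding support_def tuple_nth_x by auto
    then show ?thesis
      using xy(1) sweep_reached by blast
  qed
  then have "card (Pow ?V) \<le> card ?ball"
    by (intro surj_card_le finite_pr_ball) blast
  then show ?thesis
    using card_lists_length_eq[of "UNIV :: bool set" m] finite_lists_length_eq[of "UNIV :: bool set" m]
    by (simp add: card_Pow)
qed

end

theorem lemma4p1:
  fixes G :: "tree_map set" and S :: "tree_map list" and n :: nat
  assumes "tree_subgroup G"
    and "length S = n"
    and "gen_tuple G S"
    and "\<forall>m s t. length s = m \<and> length t = m \<longrightarrow> (\<exists>g\<in>G. g s = t)"
    and "\<exists>\<alpha>::real. \<forall>m\<ge>1. \<exists>s g. length s = m \<and> g \<in> rist G s \<and> g \<noteq> id
                 \<and> real (word_length S g) \<le> \<alpha> * 2 ^ m"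
  shows "\<forall>k\<ge>n + 2. pr_exp_growth G S k"
proof (intro allI impI)
  fix k
  assume "n + 2 \<le> k"
  then interpret pr_setting G S n k
    using assms(1-3) by unfold_locales
  obtain \<alpha> :: real where \<alpha>: "\<forall>m\<ge>1. \<exists>s g. length s = m \<and> g \<in> rist G s \<and> g \<noteq> id
      \<and> real (word_length S g) \<le> \<alpha> * 2 ^ m"
    using assms(5) by blast
  define f where "f r = card (pr_ball G k (tuple id id) r)" for r
  have "2 ^ 2 ^ m \<le> f ((nat \<lceil>\<alpha>\<rceil> + 6) * 2 ^ m)" if m: "1 \<le> m" for m
  proof -
    obtain s g where "length s = m" "g \<in> rist G s" "g \<noteq> id"
      "real (word_length S g) \<le> \<alpha> * real (2 ^ m)"
      using \<alpha> m by auto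
    then show ?thesis
      unfolding f_def using assms(4) le_nat_ceiling_mult[of "word_length S g" \<alpha> "2 ^ m"]
      by (intro card_ball_ge_double_exp) (auto simp: add_mult_distrib)
  qed
  moreover have "mono f"
    unfolding f_def by (intro monoI card_mono finite_pr_ball pr_ball_mono)
  ultimately obtain \<beta> :: real where "\<beta> > 1" "\<exists>R. \<forall>r\<ge>R. \<beta> ^ r \<le> real (f r)"
    using exp_growth_of_double_exp_samples[of f "nat \<lceil>\<alpha>\<rceil> + 6"] by auto
  then show "pr_exp_growth G S k"
    using tuple_in_component unfolding pr_exp_growth_def f_def by blast
qed

end
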